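(* Let $\mathcal{X}$ be a finite set, $\pi$ a probability mass function on $\mathcal{X}$ with full support, and $P$ a $\pi$-stationary transition matrix on $\mathcal{X}$. Let a group $\mathcal{G}$ act on $\mathcal{X}$ with orbits $\mathcal{O}_1,\dots,\mathcal{O}_k$, and let $G$ be the associated Gibbs orbit kernel. For each $i\in\{1,\dots,k\}$, the restriction chain $(GPG)_i$ on $\mathcal{O}_i$ has eigenvalues $\lambda_1=1$ and $\lambda_2=1-\overline{a}_i$, where $a_i(x):=\sum_{y\in\mathcal{O}_i}P(x,y)$ and $\overline{a}_i:=\sum_{x\in\mathcal{O}_i}\frac{\pi(x)}{\pi(\mathcal{O}_i)}\sum_{y\in\mathcal{O}_i}P(x,y)$.
   Context: The Gibbs orbit kernel is $G(x,y)=\pi(y)/\pi(\mathcal{O}(x))$ if $y\in\mathcal{O}(x)$ (the orbit of $x$), and $0$ otherwise, where $\pi(A)=\sum_{z\in A}\pi(z)$. For a transition matrix $K$ on $\mathcal{X}$, the restriction chain $K_i$ on $\mathcal{O}_i$ is the matrix on $\mathcal{O}_i\times\mathcal{O}_i$ with $K_i(x,y)=K(x,y)$ for $x\ne y$ and $K_i(x,x)=1-\sum_{z\in\mathcal{O}_i\setminus\{x\}}K(x,z)$. *)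

theory Defs
  imports "HOL-Analysis.Analysis" "HOL-Algebra.Group_Action"
begin

text \<open>Kernels (matrices) on a finite state space X are functions of type
  'a => 'a => real; only their values on X are relevant.\<close>

definition pmf_full_support :: "'a set \<Rightarrow> ('a \<Rightarrow> real) \<Rightarrow> bool" where
  "pmf_full_support X \<pi> \<longleftrightarrow> (\<forall>x\<in>X. \<pi> x > 0) \<and> (\<Sum>x\<in>X. \<pi> x) = 1"

definition transition_matrix :: "'a set \<Rightarrow> ('a \<Rightarrow> 'a \<Rightarrow> real) \<Rightarrow> bool" where
  "transition_matrix X P \<longleftrightarrow>
     (\<forall>x\<in>X. \<forall>y\<in>X. P x y \<ge> 0) \<and> (\<forall>x\<in>X. (\<Sum>y\<in>X. P x y) = 1)"

definition stationary :: "'a set \<Rightarrow> ('a \<Rightarrow> real) \<Rightarrow> ('a \<Rightarrow> 'a \<Rightarrow> real) \<Rightarrow> bool" where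
  "stationary X \<pi> P \<longleftrightarrow> (\<forall>y\<in>X. (\<Sum>x\<in>X. \<pi> x * P x y) = \<pi> y)"

definition kmult :: "'a set \<Rightarrow> ('a \<Rightarrow> 'a \<Rightarrow> real) \<Rightarrow> ('a \<Rightarrow> 'a \<Rightarrow> real) \<Rightarrow> 'a \<Rightarrow> 'a \<Rightarrow> real" where
  "kmult X K L x y = (\<Sum>z\<in>X. K x z * L z y)"

definition gibbs_orbit_kernel ::
  "('g, 'b) monoid_scheme \<Rightarrow> ('g \<Rightarrow> 'a \<Rightarrow> 'a) \<Rightarrow> ('a \<Rightarrow> real) \<Rightarrow> 'a \<Rightarrow> 'a \<Rightarrow> real" where
  "gibbs_orbit_kernel G \<phi> \<pi> x y =
     (if y \<in> orbit G \<phi> x then \<pi> y / (\<Sum>z\<in>orbit G \<phi> x. \<pi> z) else 0)"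

definition restriction_chain :: "('a \<Rightarrow> 'a \<Rightarrow> real) \<Rightarrow> 'a set \<Rightarrow> 'a \<Rightarrow> 'a \<Rightarrow> real" where
  "restriction_chain K Ob x y =
     (if x \<noteq> y then K x y else 1 - (\<Sum>z\<in>Ob - {x}. K x z))"

definition is_eigenvalue_on :: "'a set \<Rightarrow> ('a \<Rightarrow> 'a \<Rightarrow> real) \<Rightarrow> complex \<Rightarrow> bool" where
  "is_eigenvalue_on S K mu \<longleftrightarrow>
     (\<exists>f :: 'a \<Rightarrow> complex. (\<exists>x\<in>S. f x \<noteq> 0) \<and>
        (\<forall>x\<in>S. (\<Sum>y\<in>S. of_real (K x y) * f y) = mu * f x))"

end

theory Submission
  imports Defs
begin

text \<open>On an orbit \<open>O\<close> the Gibbs orbit kernel has identical rows \<open>q = \<pi>|\<^sub>O / \<pi>(O)\<close>, so for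
  \<open>x, y \<in> O\<close> the sandwich \<open>GPG\<close> is the rank-one matrix \<open>(GPG)(x,y) = a q(y)\<close> with \<open>a\<close> the
  \<open>q\<close>-average of the row sums \<open>\<Sum>\<^sub>y\<^sub>\<in>\<^sub>O P(x,y)\<close>. Filling in the diagonal, the restriction chain is
  \<open>(1 - a) I + a 1 q\<^sup>T\<close>. A matrix of this form acts on a vector \<open>f\<close> as \<open>(1 - a) f + a \<langle>q, f\<rangle> 1\<close>:
  constants are eigenvectors for \<open>1\<close>, the hyperplane \<open>\<langle>q, f\<rangle> = 0\<close> is the eigenspace for
  \<open>1 - a\<close>, and an eigenvector for any other eigenvalue is constant, so that eigenvalue is \<open>1\<close>.\<close>

locale identity_rank_one_mixture =
  fixes S :: "'a set" and K :: "'a \<Rightarrow> 'a \<Rightarrow> real" and a :: real and q :: "'a \<Rightarrow> real"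
  assumes finite_S: "finite S"
    and sum_q: "(\<Sum>y\<in>S. q y) = 1"
    and kernel_eq: "\<And>x y. x \<in> S \<Longrightarrow> y \<in> S \<Longrightarrow> K x y = (if x = y then 1 - a else 0) + a * q y"
begin

lemma kernel_apply:
  fixes f :: "'a \<Rightarrow> complex"
  assumes x: "x \<in> S"
  shows "(\<Sum>y\<in>S. of_real (K x y) * f y) = of_real (1 - a) * f x + of_real a * (\<Sum>y\<in>S. of_real (q y) * f y)"
proof -
  have "(\<Sum>y\<in>S. of_real (K x y) * f y)
      = (\<Sum>y\<in>S. (if x = y then of_real (1 - a) * f y else 0) + of_real a * (of_real (q y) * f y))"
    using x by (intro sum.cong) (auto simp: kernel_eq algebra_simps)
  also have "\<dots> = of_real (1 - a) * f x + of_real a * (\<Sum>y\<in>S. of_real (q y) * f y)"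
    using finite_S x by (simp add: sum.distrib sum_distrib_left)
  finally show ?thesis .
qed

lemma sum_q_complex: "(\<Sum>y\<in>S. complex_of_real (q y)) = 1"
  by (metis sum_q of_real_1 of_real_sum)

lemma is_eigenvalue_on_one:
  assumes "S \<noteq> {}"
  shows "is_eigenvalue_on S K 1"
  unfolding is_eigenvalue_on_def
proof (intro exI[of _ "\<lambda>_. 1"] conjI ballI)
  show "\<exists>x\<in>S. (1::complex) \<noteq> 0"
    using assms by auto
  show "(\<Sum>y\<in>S. complex_of_real (K x y) * 1) = 1 * 1" if "x \<in> S" for x
    using kernel_apply[OF that, of "\<lambda>_. 1"] sum_q_complex by simp
qed

lemma is_eigenvalue_on_one_minus:
  assumes "card S \<ge> 2"
  shows "is_eigenvalue_on S K (of_real (1 - a))"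
proof -
  obtain u where u: "u \<in> S" "q u \<noteq> 0"
    using sum_q by (metis one_neq_zero sum.neutral)
  have "card (S - {u}) \<ge> 1"
    using assms u finite_S by simp
  then obtain v where v: "v \<in> S" "v \<noteq> u"
    by (metis Diff_iff card.empty ex_in_conv insertI1 not_one_le_zero)
  define f where "f y = (if y = u then complex_of_real (q v) else if y = v then - complex_of_real (q u) else 0)" for y
  have "(\<Sum>y\<in>S. complex_of_real (q y) * f y)
      = (\<Sum>y\<in>S. (if y = u then complex_of_real (q u * q v) else 0) + (if y = v then - complex_of_real (q v * q u) else 0))"
    using v by (intro sum.cong) (auto simp: f_def)
  also have "\<dots> = 0"
    using u v finite_S by (simp add: sum.distrib)
  finally have orthogonal: "(\<Sum>y\<in>S. complex_of_real (q y) * f y) = 0" .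
  show ?thesis
    unfolding is_eigenvalue_on_def
  proof (intro exI[of _ f] conjI ballI)
    show "\<exists>x\<in>S. f x \<noteq> 0"
      using u v by (intro bexI[of _ v]) (auto simp: f_def)
    show "(\<Sum>y\<in>S. complex_of_real (K x y) * f y) = of_real (1 - a) * f x" if "x \<in> S" for x
      using kernel_apply[OF that, of f] orthogonal by simp
  qed
qed

lemma is_eigenvalue_on_cases:
  assumes "is_eigenvalue_on S K mu"
  shows "mu = 1 \<or> mu = of_real (1 - a)"
proof (rule disjCI)
  assume mu: "mu \<noteq> of_real (1 - a)"
  obtain f x0 where x0: "x0 \<in> S" "f x0 \<noteq> 0"
    and eigen: "\<And>x. x \<in> S \<Longrightarrow> (\<Sum>y\<in>S. complex_of_real (K x y) * f y) = mu * f x"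
    using assms unfolding is_eigenvalue_on_def by blast
  define c where "c = (\<Sum>y\<in>S. complex_of_real (q y) * f y)"
  have eq: "mu * f x = of_real (1 - a) * f x + of_real a * c" if "x \<in> S" for x
    using eigen[OF that] kernel_apply[OF that, of f] unfolding c_def by simp
  have f_constant: "f x = of_real a * c / (mu - of_real (1 - a))" if "x \<in> S" for x
    using eq[OF that] mu by (simp add: field_simps)
  have "c = (\<Sum>y\<in>S. complex_of_real (q y) * f x0)"
    unfolding c_def using f_constant x0 by (intro sum.cong) auto
  also have "\<dots> = f x0"
    using sum_q_complex by (simp add: sum_distrib_right[symmetric])
  finally have "mu * f x0 = 1 * f x0"
    using eq[OF x0(1)] by (simp add: algebra_simps)
  with x0 show "mu = 1"
    by simp
qed

end

lemma identity_rank_one_mixture_restriction_chain: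
  assumes "finite S" and "(\<Sum>y\<in>S. q y) = 1"
    and M: "\<And>x y. x \<in> S \<Longrightarrow> y \<in> S \<Longrightarrow> M x y = a * q y"
  shows "identity_rank_one_mixture S (restriction_chain M S) a q"
proof
  fix x y assume xy: "x \<in> S" "y \<in> S"
  have "(\<Sum>z\<in>S - {x}. M x z) = (\<Sum>z\<in>S - {x}. a * q z)"
    using M xy by (intro sum.cong) auto
  also have "\<dots> = a * (1 - q x)"
    using assms(1,2) xy by (simp add: sum_diff1 sum_distrib_left[symmetric])
  finally show "restriction_chain M S x y = (if x = y then 1 - a else 0) + a * q y"
    using M[OF xy] unfolding restriction_chain_def by (cases "x = y") (simp_all add: algebra_simps)
qed (use assms in auto)

lemma (in group_action) orbit_eq_if_mem_orbits:
  assumes "Ob \<in> orbits G E \<phi>" and "x \<in> Ob"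
  shows "orbit G \<phi> x = Ob"
proof -
  have x: "x \<in> E"
    using assms orbits_coverture by blast
  then have "orbit G \<phi> x \<in> orbits G E \<phi>"
    unfolding orbits_def by blast
  then show ?thesis
    using disjoint_union[OF _ assms(1)] assms(2) orbit_refl[OF x] by blast
qed

lemma (in group_action) orbit_disjoint_if_not_mem_orbits:
  assumes "Ob \<in> orbits G E \<phi>" and "x \<in> E" and "x \<notin> Ob"
  shows "orbit G \<phi> x \<inter> Ob = {}"
proof -
  have "orbit G \<phi> x \<in> orbits G E \<phi>"
    using assms(2) unfolding orbits_def by blast
  then show ?thesis
    using disjoint_union[OF _ assms(1)] assms(3) orbit_refl[OF assms(2)] by blast
qed

lemma gibbs_orbit_kernel_orbit:
  assumes "group_action G X \<phi>" and "Ob \<in> orbits G X \<phi>"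
    and "x \<in> X" and "x \<in> Ob \<or> y \<in> Ob"
  shows "gibbs_orbit_kernel G \<phi> \<pi> x y = (if x \<in> Ob \<and> y \<in> Ob then \<pi> y / (\<Sum>z\<in>Ob. \<pi> z) else 0)"
proof (cases "x \<in> Ob")
  case True
  then show ?thesis
    using group_action.orbit_eq_if_mem_orbits[OF assms(1,2)]
    unfolding gibbs_orbit_kernel_def by auto
next
  case False
  then show ?thesis
    using group_action.orbit_disjoint_if_not_mem_orbits[OF assms(1,2,3)] assms(4)
    unfolding gibbs_orbit_kernel_def by auto
qed

lemma kmult_gibbs_orbit_kernel_left:
  assumes "finite X" and "group_action G X \<phi>" and Ob: "Ob \<in> orbits G X \<phi>" and "x \<in> Ob"
  shows "kmult X (gibbs_orbit_kernel G \<phi> \<pi>) L x y = (\<Sum>z\<in>Ob. \<pi> z / (\<Sum>z\<in>Ob. \<pi> z) * L z y)"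
proof -
  have "Ob \<subseteq> X"
    using Ob group_action.orbits_coverture[OF assms(2)] by blast
  then have "(\<Sum>z\<in>Ob. \<pi> z / (\<Sum>z\<in>Ob. \<pi> z) * L z y) = kmult X (gibbs_orbit_kernel G \<phi> \<pi>) L x y"
    unfolding kmult_def using assms gibbs_orbit_kernel_orbit[OF assms(2,3)]
    by (intro sum.mono_neutral_cong_left) auto
  then show ?thesis ..
qed

lemma kmult_gibbs_orbit_kernel_right:
  assumes "finite X" and "group_action G X \<phi>" and Ob: "Ob \<in> orbits G X \<phi>" and "y \<in> Ob"
  shows "kmult X L (gibbs_orbit_kernel G \<phi> \<pi>) x y = (\<Sum>w\<in>Ob. L x w) * (\<pi> y / (\<Sum>z\<in>Ob. \<pi> z))"
proof -
  have "Ob \<subseteq> X"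
    using Ob group_action.orbits_coverture[OF assms(2)] by blast
  then have "(\<Sum>w\<in>Ob. L x w * (\<pi> y / (\<Sum>z\<in>Ob. \<pi> z))) = kmult X L (gibbs_orbit_kernel G \<phi> \<pi>) x y"
    unfolding kmult_def using assms gibbs_orbit_kernel_orbit[OF assms(2,3)]
    by (intro sum.mono_neutral_cong_left) auto
  then show ?thesis
    by (simp only: sum_distrib_right)
qed

lemma kmult_gibbs_orbit_kernel_sandwich:
  assumes "finite X" and "group_action G X \<phi>" and "Ob \<in> orbits G X \<phi>" and "x \<in> Ob" and "y \<in> Ob"
  shows "kmult X (kmult X (gibbs_orbit_kernel G \<phi> \<pi>) P) (gibbs_orbit_kernel G \<phi> \<pi>) x y
       = (\<Sum>z\<in>Ob. \<pi> z / (\<Sum>z\<in>Ob. \<pi> z) * (\<Sum>w\<in>Ob. P z w)) * (\<pi> y / (\<Sum>z\<in>Ob. \<pi> z))"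
proof -
  have "kmult X (kmult X (gibbs_orbit_kernel G \<phi> \<pi>) P) (gibbs_orbit_kernel G \<phi> \<pi>) x y
      = (\<Sum>w\<in>Ob. \<Sum>z\<in>Ob. \<pi> z / (\<Sum>z\<in>Ob. \<pi> z) * P z w) * (\<pi> y / (\<Sum>z\<in>Ob. \<pi> z))"
    using assms by (simp add: kmult_gibbs_orbit_kernel_right kmult_gibbs_orbit_kernel_left)
  also have "(\<Sum>w\<in>Ob. \<Sum>z\<in>Ob. \<pi> z / (\<Sum>z\<in>Ob. \<pi> z) * P z w)
      = (\<Sum>z\<in>Ob. \<pi> z / (\<Sum>z\<in>Ob. \<pi> z) * (\<Sum>w\<in>Ob. P z w))"
    by (subst sum.swap) (simp add: sum_distrib_left)
  finally show ?thesis .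
qed

theorem proposition2p6:
  fixes X :: "'a set" and \<pi> :: "'a \<Rightarrow> real" and P :: "'a \<Rightarrow> 'a \<Rightarrow> real"
    and G :: "('g, 'b) monoid_scheme" and \<phi> :: "'g \<Rightarrow> 'a \<Rightarrow> 'a" and Ob :: "'a set"
  assumes "finite X"
    and "pmf_full_support X \<pi>"
    and "transition_matrix X P"
    and "stationary X \<pi> P"
    and "group_action G X \<phi>"
    and "Ob \<in> orbits G X \<phi>"
  defines "abar \<equiv> (\<Sum>x\<in>Ob. \<pi> x / (\<Sum>z\<in>Ob. \<pi> z) * (\<Sum>y\<in>Ob. P x y))"
  defines "K \<equiv> restriction_chain
             (kmult X (kmult X (gibbs_orbit_kernel G \<phi> \<pi>) P) (gibbs_orbit_kernel G \<phi> \<pi>)) Ob"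
  shows "is_eigenvalue_on Ob K 1
       \<and> (card Ob \<ge> 2 \<longrightarrow> is_eigenvalue_on Ob K (of_real (1 - abar)))
       \<and> (\<forall>mu. is_eigenvalue_on Ob K mu \<longrightarrow> mu = 1 \<or> mu = of_real (1 - abar))"
proof -
  interpret group_action G X \<phi> by fact
  have Ob_sub: "Ob \<subseteq> X" and "Ob \<noteq> {}"
    using assms(6) orbits_coverture orbit_refl unfolding orbits_def by blast+
  have "(\<Sum>z\<in>Ob. \<pi> z) > 0"
    using assms(1,2) Ob_sub \<open>Ob \<noteq> {}\<close> unfolding pmf_full_support_def
    by (intro sum_pos) (auto intro: finite_subset)
  then have "(\<Sum>y\<in>Ob. \<pi> y / (\<Sum>z\<in>Ob. \<pi> z)) = 1"
    by (simp add: sum_divide_distrib[symmetric])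
  then interpret identity_rank_one_mixture Ob K abar "\<lambda>y. \<pi> y / (\<Sum>z\<in>Ob. \<pi> z)"
    unfolding K_def abar_def using assms(1,5,6) Ob_sub
    by (intro identity_rank_one_mixture_restriction_chain)
      (auto intro: finite_subset simp: kmult_gibbs_orbit_kernel_sandwich)
  show ?thesis
    using is_eigenvalue_on_one[OF \<open>Ob \<noteq> {}\<close>] is_eigenvalue_on_one_minus is_eigenvalue_on_cases by blast
qed

end
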